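(* Let $f_1,f_2$ be strongly hyperbolic functions and let $p_1,p_2,p_3\in\mathbb{R}^2$ be three points in admissible position. Then either there exist $a_0>0$, $b_0,c_0\in\mathbb{R}$ such that $\overline{f_{a_0,b_0,c_0}}$ contains $p_1,p_2,p_3$, or there exist $s_0<0$, $t_0\in\mathbb{R}$ such that $\overline{l_{s_0,t_0}}$ contains $p_1,p_2,p_3$.
   Context: Identify $\mathbb{S}^1$ with $\mathbb{R}\cup\{\infty\}$, $\mathcal{P}=\mathbb{S}^1\times\mathbb{S}^1\supset\mathbb{R}^2$, $\mathbb{R}^+=(0,\infty)$. A function $f:\mathbb{R}^+\to\mathbb{R}^+$ is strongly hyperbolic if: (1) $\lim_{x\to0+}f(x)=+\infty$, $\lim_{x\to+\infty}f(x)=0$; (2) $f$ strictly convex; (3) $\lim_{x\to+\infty}f(x+b)/f(x)=1$ for each $b\in\mathbb{R}$; (4) $f$ differentiable; (5) $\ln|f'|$ strictly convex. For $a>0$, $b,c\in\mathbb{R}$: $f_{a,b,c}(x)=af_1(x+b)+c$ for $x>-b$, $f_{a,b,c}(x)=-af_2(-x-b)+c$ for $x<-b$; $\overline{f_{a,b,c}}=\{(x,f_{a,b,c}(x)):x\ne-b\}\cup\{(-b,\infty),(\infty,c)\}$; $\overline{l_{s,t}}=\{(x,sx+t):x\in\mathbb{R}\}\cup\{(\infty,\infty)\}$. Three points are in admissible position if they are all contained in one set of the form $\{(x,sx+t):x\in\mathbb{R}\}\cup\{(\infty,\infty)\}$ with $s<0$, or of the form $\{(x,y)\in\mathbb{R}^2:(x-b)(y-c)=a\}\cup\{(\infty,c),(b,\infty)\}$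 with $a>0$, $b,c\in\mathbb{R}$. *)

theory Defs
  imports "HOL-Analysis.Analysis"
begin

text \<open>The circle S^1 = R \<union> {\<infinity>}, as an extended real line with one point at infinity.\<close>
datatype ext = Fin real | Infty

definition strictly_convex_on :: "real set \<Rightarrow> (real \<Rightarrow> real) \<Rightarrow> bool" where
  "strictly_convex_on S f \<longleftrightarrow>
     (\<forall>x\<in>S. \<forall>y\<in>S. \<forall>t. x \<noteq> y \<and> 0 < t \<and> t < 1 \<longrightarrow>
        f (t * x + (1 - t) * y) < t * f x + (1 - t) * f y)"

text \<open>Strongly hyperbolic functions R^+ \<rightarrow> R^+ (values outside (0,\<infinity>) irrelevant).\<close>
definition strongly_hyperbolic :: "(real \<Rightarrow> real) \<Rightarrow> bool" where
  "strongly_hyperbolic f \<longleftrightarrow>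
     (\<forall>x>0. f x > 0) \<and>
     filterlim f at_top (at_right 0) \<and>
     (f \<longlongrightarrow> 0) at_top \<and>
     strictly_convex_on {0<..} f \<and>
     (\<forall>b::real. ((\<lambda>x. f (x + b) / f x) \<longlongrightarrow> 1) at_top) \<and>
     (\<forall>x>0. f differentiable (at x)) \<and>
     strictly_convex_on {0<..} (\<lambda>x. ln \<bar>deriv f x\<bar>)"

definition fabc :: "(real \<Rightarrow> real) \<Rightarrow> (real \<Rightarrow> real) \<Rightarrow> real \<Rightarrow> real \<Rightarrow> real \<Rightarrow> real \<Rightarrow> real" where
  "fabc f1 f2 a b c x = (if x > - b then a * f1 (x + b) + c else - a * f2 (- x - b) + c)"

definition fabc_closure :: "(real \<Rightarrow> real) \<Rightarrow> (real \<Rightarrow> real) \<Rightarrow> real \<Rightarrow> real \<Rightarrow> real \<Rightarrow> (ext \<times> ext) set" where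
  "fabc_closure f1 f2 a b c =
     {(Fin x, Fin (fabc f1 f2 a b c x)) | x. x \<noteq> - b} \<union> {(Fin (- b), Infty), (Infty, Fin c)}"

definition line_closure :: "real \<Rightarrow> real \<Rightarrow> (ext \<times> ext) set" where
  "line_closure s t = {(Fin x, Fin (s * x + t)) | x. True} \<union> {(Infty, Infty)}"

definition hyperbola_closure :: "real \<Rightarrow> real \<Rightarrow> real \<Rightarrow> (ext \<times> ext) set" where
  "hyperbola_closure a b c =
     {(Fin x, Fin y) | x y. (x - b) * (y - c) = a} \<union> {(Infty, Fin c), (Fin b, Infty)}"

definition admissible_position :: "ext \<times> ext \<Rightarrow> ext \<times> ext \<Rightarrow> ext \<times> ext \<Rightarrow> bool" where
  "admissible_position p1 p2 p3 \<longleftrightarrow>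
     (\<exists>s t. s < 0 \<and> {p1, p2, p3} \<subseteq> line_closure s t) \<or>
     (\<exists>a b c. a > 0 \<and> {p1, p2, p3} \<subseteq> hyperbola_closure a b c)"

end

theory Submission
  imports Defs
begin

text \<open>
  Unless the points lie on a line of negative slope, they lie on a hyperbola (x - b)(y - c) = a
  with a > 0; order them so that x1 < x2 < x3. The point reflection (x, y) \<mapsto> (-x, -y) preserves
  such hyperbolas and exchanges the roles of f1 and f2, so we may assume b < x2. Then either all
  three points lie on the right branch, where they are decreasing and strictly convex, or only the
  first one lies on the left branch. Either way we move the pole of the curve until its values at
  x1, x2, x3 are collinear with y1, y2, y3 as points of the plane; an affine fit then yields a and c.
  Such a position exists by the intermediate value theorem: near the pole of f1 the blow-up of f1
  decides the sign of the collinearity defect. At the other end, in the two-branch case the pole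
  of f2 decides it; in the one-branch case the condition f(x + b)/f(x) \<rightarrow> 1 keeps -f' from decaying
  geometrically, which by convexity makes the later drops of f comparatively large.
\<close>

lemma strictly_convex_on_imp_convex_on:
  fixes S :: "real set"
  assumes "strictly_convex_on S f" and "convex S"
  shows "convex_on S f"
proof (rule convex_onI)
  fix t :: real and x y assume "0 < t" "t < 1" "x \<in> S" "y \<in> S"
  then have "f ((1 - t) * x + t * y) < (1 - t) * f x + t * f y" if "x \<noteq> y"
    using assms(1)[unfolded strictly_convex_on_def, rule_format, of x y "1 - t"] that by simp
  then show "f ((1 - t) *\<^sub>R x + t *\<^sub>R y) \<le> (1 - t) * f x + t * f y"
    by (cases "x = y") (auto simp: algebra_simps)
qed fact

lemma filterlim_at_top_at_right_0E:
  fixes g :: "real \<Rightarrow> real"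
  assumes "filterlim g at_top (at_right 0)" and "e > 0"
  obtains u where "0 < u" "u < e" "M < g u"
proof -
  have "\<forall>\<^sub>F u in at_right 0. M < g u"
    using assms(1) filterlim_at_top_dense by blast
  moreover have "\<forall>\<^sub>F u in at_right 0. 0 < u \<and> u < e"
    using assms(2) eventually_at_right_field by blast
  ultimately have "\<forall>\<^sub>F u in at_right 0. 0 < u \<and> u < e \<and> M < g u"
    by eventually_elim auto
  then show thesis
    using that eventually_happens' trivial_limit_at_right_real by blast
qed

lemma collinear_values_affine_fit:
  fixes v1 v2 v3 y1 y2 y3 :: real
  assumes "v1 \<noteq> v2" and "(y1 - y2) * (v2 - v3) = (y2 - y3) * (v1 - v2)"
  shows "\<exists>a c. a = (y1 - y2) / (v1 - v2) \<and> a * v1 + c = y1 \<and> a * v2 + c = y2 \<and> a * v3 + c = y3"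
proof -
  define a where "a = (y1 - y2) / (v1 - v2)"
  have "a * (v1 - v2) = y1 - y2"
    using assms(1) by (simp add: a_def)
  moreover have "a * (v2 - v3) = y2 - y3"
    using assms by (simp add: a_def)
  ultimately have "a * v1 + (y1 - a * v1) = y1 \<and> a * v2 + (y1 - a * v1) = y2 \<and>
      a * v3 + (y1 - a * v1) = y3"
    by (simp add: algebra_simps)
  then show ?thesis
    unfolding a_def by blast
qed

context
  fixes g :: "real \<Rightarrow> real"
  assumes sh: "strongly_hyperbolic g"
begin

lemma strongly_hyperbolic_pos: "x > 0 \<Longrightarrow> g x > 0"
  using sh by (simp add: strongly_hyperbolic_def)

lemma strongly_hyperbolic_has_deriv: "x > 0 \<Longrightarrow> (g has_real_derivative deriv g x) (at x)"
  using sh by (simp add: strongly_hyperbolic_def DERIV_deriv_iff_real_differentiable)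

lemma strongly_hyperbolic_continuous_on: "continuous_on {0<..} g"
  using strongly_hyperbolic_has_deriv
  by (metis DERIV_isCont continuous_at_imp_continuous_on greaterThan_iff)

lemma strongly_hyperbolic_above_tangent:
  assumes "x > 0" "y > 0"
  shows "deriv g x * (y - x) \<le> g y - g x"
proof (rule convex_on_imp_above_tangent)
  show "convex_on {0<..} g"
    using sh by (simp add: strongly_hyperbolic_def strictly_convex_on_imp_convex_on)
  show "(g has_real_derivative deriv g x) (at x within {0<..})"
    using strongly_hyperbolic_has_deriv[OF assms(1)] by (rule has_field_derivative_at_within)
qed (use assms in \<open>auto simp: interior_open\<close>)

lemma strongly_hyperbolic_deriv_neg:
  assumes "x > 0"
  shows "deriv g x < 0"
proof (rule ccontr)
  assume "\<not> deriv g x < 0"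
  have "\<forall>\<^sub>F y in at_top. g x \<le> g y"
    using eventually_gt_at_top[of x]
  proof eventually_elim
    fix y assume "x < y"
    with \<open>\<not> deriv g x < 0\<close> have "0 \<le> deriv g x * (y - x)"
      by simp
    with strongly_hyperbolic_above_tangent[of x y] \<open>x < y\<close> assms show "g x \<le> g y"
      by simp
  qed
  moreover have "(g \<longlongrightarrow> 0) at_top"
    using sh by (simp add: strongly_hyperbolic_def)
  ultimately have "g x \<le> 0"
    by (simp add: tendsto_lowerbound)
  with strongly_hyperbolic_pos[OF assms] show False by simp
qed

lemma strongly_hyperbolic_strict_decreasing:
  assumes "0 < x" "x < y"
  shows "g y < g x"
proof (rule DERIV_neg_imp_decreasing_open[OF assms(2)])
  show "continuous_on {x..y} g"
    using strongly_hyperbolic_continuous_on by (rule continuous_on_subset) (use assms in auto)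
next
  fix z assume "x < z" "z < y"
  with assms have "z > 0" by simp
  then show "\<exists>d. (g has_real_derivative d) (at z) \<and> d < 0"
    using strongly_hyperbolic_has_deriv strongly_hyperbolic_deriv_neg by blast
qed

lemma strongly_hyperbolic_large_near_0:
  assumes "e > 0"
  obtains u where "0 < u" "u < e" "M < g u"
  using filterlim_at_top_at_right_0E[OF _ assms] sh that
  unfolding strongly_hyperbolic_def by blast

lemma strongly_hyperbolic_deriv_not_geometric:
  assumes "K > 1" "D > 0"
  shows "\<exists>u>0. - deriv g u < K * - deriv g (u + D)"
proof (rule ccontr)
  \<comment> \<open>If -g' decayed by the factor K over every step D, then \<phi> would increase to its limit 0,
    giving g (u + D) \<le> g u / K for all u > 0, whereas g (u + D) / g u tends to 1.\<close>
  assume "\<not> ?thesis"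
  then have geometric: "deriv g u \<le> K * deriv g (u + D)" if "u > 0" for u
    using that by force
  define \<phi> where "\<phi> u = g (u + D) - g u / K" for u
  have \<phi>_mono: "\<phi> u \<le> \<phi> v" if "0 < u" "u \<le> v" for u v
  proof (rule DERIV_nonneg_imp_increasing_open[OF \<open>u \<le> v\<close>])
    fix z assume "u < z" "z < v"
    with that have "z > 0" by simp
    have "((\<lambda>z. g (z + D)) has_real_derivative deriv g (z + D)) (at z)"
      using strongly_hyperbolic_has_deriv[of "z + D"] \<open>z > 0\<close> assms by (simp add: DERIV_shift)
    then have "(\<phi> has_real_derivative deriv g (z + D) - deriv g z / K) (at z)"
      unfolding \<phi>_def using strongly_hyperbolic_has_deriv[OF \<open>z > 0\<close>]
      by (intro DERIV_diff DERIV_cdivide)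
    moreover have "deriv g z / K \<le> deriv g (z + D)"
      using geometric[OF \<open>z > 0\<close>] assms by (simp add: divide_le_eq mult.commute)
    ultimately show "\<exists>d. (\<phi> has_real_derivative d) (at z) \<and> 0 \<le> d"
      by auto
  next
    show "continuous_on {u..v} \<phi>"
      unfolding \<phi>_def using that assms
      by (intro continuous_intros continuous_on_compose2[OF strongly_hyperbolic_continuous_on])
        auto
  qed
  have g_at_top: "(g \<longlongrightarrow> 0) at_top"
    using sh by (simp add: strongly_hyperbolic_def)
  have "filterlim (\<lambda>u. u + D) at_top at_top"
    using filterlim_tendsto_add_at_top[OF tendsto_const[of D] filterlim_ident]
    by (simp add: add.commute)
  then have "((\<lambda>u. g (u + D)) \<longlongrightarrow> 0) at_top"
    by (rule filterlim_compose[OF g_at_top])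
  then have \<phi>_lim: "(\<phi> \<longlongrightarrow> 0) at_top"
    unfolding \<phi>_def using assms tendsto_diff[OF _ tendsto_divide[OF g_at_top tendsto_const]]
    by force
  have \<phi>_nonpos: "\<phi> u \<le> 0" if "u > 0" for u
  proof (rule tendsto_lowerbound[OF \<phi>_lim])
    show "\<forall>\<^sub>F v in at_top. \<phi> u \<le> \<phi> v"
      using eventually_ge_at_top[of u] by eventually_elim (rule \<phi>_mono[OF that])
  qed simp
  have ratio_le: "\<forall>\<^sub>F u in at_top. g (u + D) / g u \<le> 1 / K"
    using eventually_gt_at_top[of 0]
  proof eventually_elim
    fix u :: real assume "u > 0"
    then show "g (u + D) / g u \<le> 1 / K"
      using \<phi>_nonpos[of u] strongly_hyperbolic_pos[of u] by (simp add: \<phi>_def pos_divide_le_eq)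
  qed
  have "((\<lambda>u. g (u + D) / g u) \<longlongrightarrow> 1) at_top"
    using sh by (simp add: strongly_hyperbolic_def)
  from tendsto_upperbound[OF this ratio_le] have "1 \<le> 1 / K"
    by simp
  with assms show False
    by simp
qed

lemma strongly_hyperbolic_second_drop_dominates:
  fixes \<alpha> \<beta> d1 d2 :: real
  assumes "\<alpha> > 0" "d1 > 0" "d2 > 0" "\<alpha> * d1 < \<beta> * d2"
  shows "\<exists>u>0. \<alpha> * (g u - g (u + d1)) < \<beta> * (g (u + d1) - g (u + d1 + d2))"
proof -
  have "0 < \<beta> * d2"
    using assms mult_pos_pos[of \<alpha> d1] by linarith
  then have "\<beta> > 0"
    using assms(3) by (simp add: zero_less_mult_iff)
  define K where "K = \<beta> * d2 / (\<alpha> * d1)"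
  have "K > 1"
    using assms by (simp add: K_def)
  then obtain u where "u > 0" and u: "- deriv g u < K * - deriv g (u + d1 + d2)"
    using strongly_hyperbolic_deriv_not_geometric[of K "d1 + d2"] assms by (auto simp: add.assoc)
  have "\<alpha> * (g u - g (u + d1)) \<le> \<alpha> * (d1 * - deriv g u)"
    using strongly_hyperbolic_above_tangent[of u "u + d1"] \<open>u > 0\<close> assms
    by (intro mult_left_mono) (auto simp: algebra_simps)
  also have "\<dots> < \<alpha> * d1 * K * - deriv g (u + d1 + d2)"
    using u assms by (simp add: algebra_simps)
  also have "\<dots> = \<beta> * (d2 * - deriv g (u + d1 + d2))"
    using assms by (simp add: K_def)
  also have "\<dots> \<le> \<beta> * (g (u + d1) - g (u + d1 + d2))"
    using strongly_hyperbolic_above_tangent[of "u + d1 + d2" "u + d1"] \<open>u > 0\<close> \<open>\<beta> > 0\<close> assms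
    by (intro mult_left_mono) (auto simp: algebra_simps)
  finally show ?thesis
    using \<open>u > 0\<close> by blast
qed

lemma strongly_hyperbolic_first_drop_dominates_near_0:
  fixes \<alpha> \<beta> d1 d2 e :: real
  assumes "\<alpha> > 0" "\<beta> \<ge> 0" "d1 > 0" "d2 > 0" "e > 0"
  shows "\<exists>u. 0 < u \<and> u < e \<and> \<beta> * (g (u + d1) - g (u + d1 + d2)) < \<alpha> * (g u - g (u + d1))"
proof -
  obtain u where u: "0 < u" "u < e" "(\<alpha> + \<beta>) * g d1 / \<alpha> < g u"
    using strongly_hyperbolic_large_near_0[OF assms(5)] by blast
  have "(\<alpha> + \<beta>) * g (u + d1) \<le> (\<alpha> + \<beta>) * g d1"
    using strongly_hyperbolic_strict_decreasing[of d1 "u + d1"] u assms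
    by (intro mult_left_mono) auto
  also have "\<dots> < \<alpha> * g u"
    using u assms by (simp add: divide_less_eq mult.commute)
  finally have "\<beta> * g (u + d1) < \<alpha> * (g u - g (u + d1))"
    by (simp add: algebra_simps)
  moreover have "0 \<le> \<beta> * g (u + d1 + d2)"
    using strongly_hyperbolic_pos[of "u + d1 + d2"] u assms by simp
  ultimately show ?thesis
    using u by (intro exI[of _ u]) (simp add: algebra_simps)
qed

lemma strongly_hyperbolic_fit_convex_triple:
  assumes "x1 < x2" "x2 < x3" "y2 < y1" "y3 < y2"
    and "(y2 - y3) * (x2 - x1) < (y1 - y2) * (x3 - x2)"
  shows "\<exists>a b c. a > 0 \<and> x1 + b > 0 \<and>
           a * g (x1 + b) + c = y1 \<and> a * g (x2 + b) + c = y2 \<and> a * g (x3 + b) + c = y3"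
proof -
  define d1 d2 where "d1 = x2 - x1" and "d2 = x3 - x2"
  \<comment> \<open>F u = 0 iff (g u, y1), (g (u + d1), y2), (g (u + d1 + d2), y3) are collinear.\<close>
  define F where
    "F u = (y1 - y2) * (g (u + d1) - g (u + d1 + d2)) - (y2 - y3) * (g u - g (u + d1))" for u
  obtain u0 where "u0 > 0" "F u0 > 0"
    using strongly_hyperbolic_second_drop_dominates[of "y2 - y3" d1 d2 "y1 - y2"] assms
    by (auto simp: F_def d1_def d2_def)
  moreover obtain u1 where "0 < u1" "u1 < u0" "F u1 < 0"
    using strongly_hyperbolic_first_drop_dominates_near_0[of "y2 - y3" "y1 - y2" d1 d2 u0]
      assms \<open>u0 > 0\<close>
    by (auto simp: F_def d1_def d2_def)
  moreover have "continuous_on {u1..u0} F"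
    unfolding F_def using \<open>0 < u1\<close> assms
    by (intro continuous_intros continuous_on_compose2[OF strongly_hyperbolic_continuous_on])
      (auto simp: d1_def d2_def)
  ultimately obtain u where "u1 \<le> u" "F u = 0"
    using IVT'[of F u1 0 u0] by auto
  with \<open>0 < u1\<close> have "u > 0" "F u = 0"
    by simp_all
  moreover have "g (u + d1) < g u"
    using strongly_hyperbolic_strict_decreasing \<open>u > 0\<close> assms by (simp add: d1_def)
  ultimately obtain a c where "a = (y1 - y2) / (g u - g (u + d1))"
      and fit: "a * g u + c = y1" "a * g (u + d1) + c = y2" "a * g (u + d1 + d2) + c = y3"
    using collinear_values_affine_fit[of "g u" "g (u + d1)" y1 y2 "g (u + d1 + d2)" y3]
    by (auto simp: F_def)
  have shift: "x1 + (u - x1) = u" "x2 + (u - x1) = u + d1" "x3 + (u - x1) = u + d1 + d2"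
    by (simp_all add: d1_def d2_def)
  have "0 < x1 + (u - x1) \<and> a * g (x1 + (u - x1)) + c = y1 \<and>
      a * g (x2 + (u - x1)) + c = y2 \<and> a * g (x3 + (u - x1)) + c = y3"
    unfolding shift using \<open>u > 0\<close> fit by blast
  moreover have "a > 0"
    using \<open>a = _\<close> \<open>g (u + d1) < g u\<close> assms by simp
  ultimately show ?thesis
    by blast
qed

end

lemma strongly_hyperbolic_drop_dominates_spread_near_0:
  fixes \<alpha> \<beta> d e :: real
  assumes sh1: "strongly_hyperbolic g1" and sh2: "strongly_hyperbolic g2"
    and "0 < \<alpha>" "\<alpha> < \<beta>" "d > 0" "e > 0"
  shows "\<exists>u. 0 < u \<and> u < d / 2 \<and> \<alpha> * (g1 u + g2 (d - u)) < \<beta> * (g1 u - g1 (u + e))"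
proof -
  obtain u where u: "0 < u" "u < d / 2" "(\<alpha> * g2 (d / 2) + \<beta> * g1 e) / (\<beta> - \<alpha>) < g1 u"
    using strongly_hyperbolic_large_near_0[OF sh1, of "d / 2"] assms by auto
  have "g2 (d - u) \<le> g2 (d / 2)" "g1 (u + e) \<le> g1 e"
    using strongly_hyperbolic_strict_decreasing[OF sh2, of "d / 2" "d - u"]
      strongly_hyperbolic_strict_decreasing[OF sh1, of e "u + e"] u assms
    by (cases "u = d / 2", auto)
  then have "\<alpha> * g2 (d - u) + \<beta> * g1 (u + e) \<le> \<alpha> * g2 (d / 2) + \<beta> * g1 e"
    using assms by (intro add_mono mult_left_mono) auto
  also have "\<dots> < (\<beta> - \<alpha>) * g1 u"
    using u assms by (simp add: pos_divide_less_eq mult.commute)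
  finally show ?thesis
    using u by (intro exI[of _ u]) (simp add: algebra_simps)
qed

lemma strongly_hyperbolic_spread_dominates_drop_near_d:
  fixes \<alpha> \<beta> d e :: real
  assumes sh1: "strongly_hyperbolic g1" and sh2: "strongly_hyperbolic g2"
    and "0 < \<alpha>" "0 \<le> \<beta>" "d > 0" "e > 0"
  shows "\<exists>u. d / 2 < u \<and> u < d \<and> \<beta> * (g1 u - g1 (u + e)) < \<alpha> * (g1 u + g2 (d - u))"
proof -
  obtain v where v: "0 < v" "v < d / 2" "\<beta> * g1 (d / 2) / \<alpha> < g2 v"
    using strongly_hyperbolic_large_near_0[OF sh2, of "d / 2"] assms by auto
  have "\<beta> * g1 (d - v) \<le> \<beta> * g1 (d / 2)"
    using strongly_hyperbolic_strict_decreasing[OF sh1, of "d / 2" "d - v"] v assms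
    by (intro mult_left_mono) auto
  also have "\<dots> < \<alpha> * g2 v"
    using v assms by (simp add: pos_divide_less_eq mult.commute)
  finally have "\<beta> * g1 (d - v) < \<alpha> * g2 (d - (d - v))"
    by simp
  moreover have "0 \<le> \<alpha> * g1 (d - v)" "0 \<le> \<beta> * g1 (d - v + e)"
    using strongly_hyperbolic_pos[OF sh1, of "d - v"]
      strongly_hyperbolic_pos[OF sh1, of "d - v + e"] v assms
    by simp_all
  ultimately show ?thesis
    using v by (intro exI[of _ "d - v"]) (simp add: algebra_simps)
qed

lemma strongly_hyperbolic_fit_two_branches:
  assumes sh1: "strongly_hyperbolic g1" and sh2: "strongly_hyperbolic g2"
    and "x1 < x2" "x2 < x3" "y1 < y3" "y3 < y2"
  shows "\<exists>a b c. a > 0 \<and> x1 + b < 0 \<and> x2 + b > 0 \<and>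
           - a * g2 (- x1 - b) + c = y1 \<and> a * g1 (x2 + b) + c = y2 \<and> a * g1 (x3 + b) + c = y3"
proof -
  define d e where "d = x2 - x1" and "e = x3 - x2"
  \<comment> \<open>u will be the distance from the pole of the fitted curve to x2; H u = 0 iff
    (- g2 (d - u), y1), (g1 u, y2), (g1 (u + e), y3) are collinear.\<close>
  define H where "H u = (y1 - y2) * (g1 u - g1 (u + e)) - (y2 - y3) * (- g2 (d - u) - g1 u)" for u
  obtain u1 where "0 < u1" "u1 < d / 2" "H u1 < 0"
    using strongly_hyperbolic_drop_dominates_spread_near_0[OF sh1 sh2, of "y2 - y3" "y2 - y1" d e]
      assms
    by (auto simp: H_def d_def e_def algebra_simps)
  moreover obtain u2 where "d / 2 < u2" "u2 < d" "0 < H u2"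
    using strongly_hyperbolic_spread_dominates_drop_near_d[OF sh1 sh2, of "y2 - y3" "y2 - y1" d e]
      assms
    by (auto simp: H_def d_def e_def algebra_simps)
  moreover have "continuous_on {u1..u2} H"
    unfolding H_def using \<open>0 < u1\<close> \<open>u2 < d\<close> assms
    by (intro continuous_intros continuous_on_compose2[OF strongly_hyperbolic_continuous_on[OF sh1]]
        continuous_on_compose2[OF strongly_hyperbolic_continuous_on[OF sh2]])
      (auto simp: e_def)
  ultimately obtain u where "u1 \<le> u" "u \<le> u2" "H u = 0"
    using IVT'[of H u1 0 u2] by auto
  with \<open>0 < u1\<close> \<open>u2 < d\<close> have "0 < u" "u < d"
    by simp_all
  then have "0 < g2 (d - u) + g1 u"
    using strongly_hyperbolic_pos[OF sh1, of u] strongly_hyperbolic_pos[OF sh2, of "d - u"] by simp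
  then obtain a c where "a = (y1 - y2) / (- g2 (d - u) - g1 u)"
      and fit: "a * - g2 (d - u) + c = y1" "a * g1 u + c = y2" "a * g1 (u + e) + c = y3"
    using collinear_values_affine_fit[of "- g2 (d - u)" "g1 u" y1 y2 "g1 (u + e)" y3] \<open>H u = 0\<close>
    by (auto simp: H_def)
  have shift: "x1 + (u - x2) = u - d" "- x1 - (u - x2) = d - u"
      "x2 + (u - x2) = u" "x3 + (u - x2) = u + e"
    by (simp_all add: d_def e_def)
  have "x1 + (u - x2) < 0 \<and> x2 + (u - x2) > 0 \<and> - a * g2 (- x1 - (u - x2)) + c = y1 \<and>
      a * g1 (x2 + (u - x2)) + c = y2 \<and> a * g1 (x3 + (u - x2)) + c = y3"
    unfolding shift using \<open>0 < u\<close> \<open>u < d\<close> fit by simp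
  moreover have "a > 0"
    unfolding \<open>a = _\<close> using \<open>0 < g2 (d - u) + g1 u\<close> assms by (intro divide_neg_neg) auto
  ultimately show ?thesis
    by blast
qed

lemma hyperbola_solve_y:
  fixes a b c x y :: real
  assumes "(x - b) * (y - c) = a" "a \<noteq> 0"
  shows "x \<noteq> b" and "y = c + a / (x - b)"
proof -
  show "x \<noteq> b"
    using assms by auto
  then have "y - c = a / (x - b)"
    using assms(1) by (simp add: eq_divide_eq mult.commute)
  then show "y = c + a / (x - b)"
    by simp
qed

lemma hyperbola_closure_Fin_iff:
  "(Fin x, Fin y) \<in> hyperbola_closure a b c \<longleftrightarrow> (x - b) * (y - c) = a"
  unfolding hyperbola_closure_def by auto

lemma reciprocal_convex_triple:
  fixes a p1 p2 p3 :: real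
  assumes "a > 0" "0 < p1" "p1 < p2" "p2 < p3"
  shows "(a / p2 - a / p3) * (p2 - p1) < (a / p1 - a / p2) * (p3 - p2)"
proof -
  have "a * (p2 - p1) * (p3 - p2) / (p2 * p3) < a * (p2 - p1) * (p3 - p2) / (p1 * p2)"
    using assms by (intro divide_strict_left_mono) auto
  then show ?thesis
    using assms by (simp add: field_simps)
qed

lemma fabc_closure_memI_right:
  assumes "0 < x + b" "a * f1 (x + b) + c = y"
  shows "(Fin x, Fin y) \<in> fabc_closure f1 f2 a b c"
  using assms unfolding fabc_closure_def fabc_def by force

lemma fabc_closure_memI_left:
  assumes "x + b < 0" "- a * f2 (- x - b) + c = y"
  shows "(Fin x, Fin y) \<in> fabc_closure f1 f2 a b c"
  using assms unfolding fabc_closure_def fabc_def by force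

lemma fabc_closure_reflect:
  "(Fin (- x), Fin (- y)) \<in> fabc_closure f2 f1 a (- b) (- c) \<longleftrightarrow>
   (Fin x, Fin y) \<in> fabc_closure f1 f2 a b c"
  unfolding fabc_closure_def fabc_def by auto

lemma strongly_hyperbolic_fit_hyperbola_right_pair:
  assumes sh1: "strongly_hyperbolic f1" and sh2: "strongly_hyperbolic f2"
    and "x1 < x2" "x2 < x3" "b < x2" "x1 \<noteq> b" "a > 0"
    and y: "y1 = c + a / (x1 - b)" "y2 = c + a / (x2 - b)" "y3 = c + a / (x3 - b)"
  shows "\<exists>a0 b0 c0. a0 > 0 \<and>
           {(Fin x1, Fin y1), (Fin x2, Fin y2), (Fin x3, Fin y3)} \<subseteq> fabc_closure f1 f2 a0 b0 c0"
proof (cases "b < x1")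
  case True
  have "y2 < y1" "y3 < y2"
    unfolding y using assms True by (simp_all add: divide_strict_left_mono)
  moreover have "(y2 - y3) * (x2 - x1) < (y1 - y2) * (x3 - x2)"
    using reciprocal_convex_triple[of a "x1 - b" "x2 - b" "x3 - b"] assms True by (simp add: y)
  ultimately obtain a0 b0 c0 where "a0 > 0" "x1 + b0 > 0"
      "a0 * f1 (x1 + b0) + c0 = y1" "a0 * f1 (x2 + b0) + c0 = y2" "a0 * f1 (x3 + b0) + c0 = y3"
    using strongly_hyperbolic_fit_convex_triple[OF sh1 \<open>x1 < x2\<close> \<open>x2 < x3\<close>] by blast
  then have "{(Fin x1, Fin y1), (Fin x2, Fin y2), (Fin x3, Fin y3)} \<subseteq> fabc_closure f1 f2 a0 b0 c0"
    using \<open>x1 < x2\<close> \<open>x2 < x3\<close> by (simp add: fabc_closure_memI_right)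
  with \<open>a0 > 0\<close> show ?thesis
    by blast
next
  case False
  with \<open>x1 \<noteq> b\<close> have "x1 < b" by simp
  have "a / (x1 - b) < 0" "0 < a / (x3 - b)" "a / (x3 - b) < a / (x2 - b)"
    using assms \<open>x1 < b\<close> by (simp_all add: divide_pos_neg divide_strict_left_mono)
  then have "y1 < y3" "y3 < y2"
    unfolding y by simp_all
  then obtain a0 b0 c0 where "a0 > 0" "x1 + b0 < 0" "x2 + b0 > 0"
      "- a0 * f2 (- x1 - b0) + c0 = y1" "a0 * f1 (x2 + b0) + c0 = y2" "a0 * f1 (x3 + b0) + c0 = y3"
    using strongly_hyperbolic_fit_two_branches[OF sh1 sh2 \<open>x1 < x2\<close> \<open>x2 < x3\<close>] by blast
  then have "{(Fin x1, Fin y1), (Fin x2, Fin y2), (Fin x3, Fin y3)} \<subseteq> fabc_closure f1 f2 a0 b0 c0"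
    using \<open>x2 < x3\<close> by (simp add: fabc_closure_memI_right fabc_closure_memI_left)
  with \<open>a0 > 0\<close> show ?thesis
    by blast
qed

lemma strongly_hyperbolic_fit_hyperbola_sorted:
  assumes sh1: "strongly_hyperbolic f1" and sh2: "strongly_hyperbolic f2"
    and "x1 < x2" "x2 < x3" "a > 0"
    and hyp: "(x1 - b) * (y1 - c) = a" "(x2 - b) * (y2 - c) = a" "(x3 - b) * (y3 - c) = a"
  shows "\<exists>a0 b0 c0. a0 > 0 \<and>
           {(Fin x1, Fin y1), (Fin x2, Fin y2), (Fin x3, Fin y3)} \<subseteq> fabc_closure f1 f2 a0 b0 c0"
proof -
  have "a \<noteq> 0"
    using \<open>a > 0\<close> by simp
  note solve = hyperbola_solve_y[OF _ this]
  consider "b < x2" | "x2 < b"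
    using solve(1)[OF hyp(2)] by linarith
  then show ?thesis
  proof cases
    case 1
    show ?thesis
      using strongly_hyperbolic_fit_hyperbola_right_pair[OF sh1 sh2 \<open>x1 < x2\<close> \<open>x2 < x3\<close> 1
          solve(1)[OF hyp(1)] \<open>a > 0\<close> solve(2)[OF hyp(1)] solve(2)[OF hyp(2)] solve(2)[OF hyp(3)]] .
  next
    case 2
    have hyp': "(- x1 - - b) * (- y1 - - c) = a" "(- x2 - - b) * (- y2 - - c) = a"
        "(- x3 - - b) * (- y3 - - c) = a"
      using hyp by (simp_all add: algebra_simps)
    have "- x3 < - x2" "- x2 < - x1" "- b < - x2"
      using assms 2 by simp_all
    from strongly_hyperbolic_fit_hyperbola_right_pair[OF sh2 sh1 this
          solve(1)[OF hyp'(3)] \<open>a > 0\<close>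
          solve(2)[OF hyp'(3)] solve(2)[OF hyp'(2)] solve(2)[OF hyp'(1)]]
    obtain a0 b0 c0 where "a0 > 0"
        "{(Fin (- x3), Fin (- y3)), (Fin (- x2), Fin (- y2)), (Fin (- x1), Fin (- y1))}
           \<subseteq> fabc_closure f2 f1 a0 b0 c0"
      by blast
    then have "{(Fin x1, Fin y1), (Fin x2, Fin y2), (Fin x3, Fin y3)}
        \<subseteq> fabc_closure f1 f2 a0 (- b0) (- c0)"
      using fabc_closure_reflect[of _ _ f2 f1 a0 "- b0" "- c0"] by simp
    with \<open>a0 > 0\<close> show ?thesis
      by blast
  qed
qed

lemma strongly_hyperbolic_fit_hyperbola:
  assumes sh1: "strongly_hyperbolic f1" and sh2: "strongly_hyperbolic f2"
    and "distinct [(x1, y1), (x2, y2), (x3, y3)]" "a > 0"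
    and hyp: "(x1 - b) * (y1 - c) = a" "(x2 - b) * (y2 - c) = a" "(x3 - b) * (y3 - c) = a"
  shows "\<exists>a0 b0 c0. a0 > 0 \<and>
           {(Fin x1, Fin y1), (Fin x2, Fin y2), (Fin x3, Fin y3)} \<subseteq> fabc_closure f1 f2 a0 b0 c0"
proof -
  note fit = strongly_hyperbolic_fit_hyperbola_sorted[OF sh1 sh2 _ _ \<open>a > 0\<close>]
  have "y1 = c + a / (x1 - b)" "y2 = c + a / (x2 - b)" "y3 = c + a / (x3 - b)"
    using hyp[THEN hyperbola_solve_y(2)] \<open>a > 0\<close> by simp_all
  with assms(3) have "x1 \<noteq> x2" "x1 \<noteq> x3" "x2 \<noteq> x3"
    by auto
  then consider "x1 < x2" "x2 < x3" | "x1 < x3" "x3 < x2" | "x2 < x1" "x1 < x3"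
    | "x2 < x3" "x3 < x1" | "x3 < x1" "x1 < x2" | "x3 < x2" "x2 < x1"
    by linarith
  then show ?thesis
  proof cases
    case 1 show ?thesis using fit[OF 1 hyp(1,2,3)] by (simp add: insert_commute)
  next
    case 2 show ?thesis using fit[OF 2 hyp(1,3,2)] by (simp add: insert_commute)
  next
    case 3 show ?thesis using fit[OF 3 hyp(2,1,3)] by (simp add: insert_commute)
  next
    case 4 show ?thesis using fit[OF 4 hyp(2,3,1)] by (simp add: insert_commute)
  next
    case 5 show ?thesis using fit[OF 5 hyp(3,1,2)] by (simp add: insert_commute)
  next
    case 6 show ?thesis using fit[OF 6 hyp(3,2,1)] by (simp add: insert_commute)
  qed
qed

theorem lemma4p7:
  fixes f1 f2 :: "real \<Rightarrow> real" and x1 y1 x2 y2 x3 y3 :: real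
  assumes "strongly_hyperbolic f1" and "strongly_hyperbolic f2"
    and "distinct [(x1, y1), (x2, y2), (x3, y3)]"
    and "admissible_position (Fin x1, Fin y1) (Fin x2, Fin y2) (Fin x3, Fin y3)"
  shows "(\<exists>a0 b0 c0. a0 > 0 \<and>
            {(Fin x1, Fin y1), (Fin x2, Fin y2), (Fin x3, Fin y3)} \<subseteq> fabc_closure f1 f2 a0 b0 c0)
       \<or> (\<exists>s0 t0. s0 < 0 \<and>
            {(Fin x1, Fin y1), (Fin x2, Fin y2), (Fin x3, Fin y3)} \<subseteq> line_closure s0 t0)"
proof (cases "\<exists>s t. s < 0 \<and>
    {(Fin x1, Fin y1), (Fin x2, Fin y2), (Fin x3, Fin y3)} \<subseteq> line_closure s t")
  case False
  then obtain a b c where "a > 0"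
      and "{(Fin x1, Fin y1), (Fin x2, Fin y2), (Fin x3, Fin y3)} \<subseteq> hyperbola_closure a b c"
    using assms(4) unfolding admissible_position_def by blast
  then have "(x1 - b) * (y1 - c) = a" "(x2 - b) * (y2 - c) = a" "(x3 - b) * (y3 - c) = a"
    by (simp_all add: hyperbola_closure_Fin_iff)
  with assms(1-3) \<open>a > 0\<close> show ?thesis
    using strongly_hyperbolic_fit_hyperbola by blast
qed simp

end
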